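(* Let $d,l,m\geq1$, fix arbitrary norms $\|\cdot\|$ on $H(d)$ and on $M_{lm}(\mathbb{R})$, and let $\mathcal{Q}=\{P_1,\dots,P_l\}$ be a measurement scheme of POVMs with outcome set $\{1,\dots,m\}$ which determines any pure state among all states. Then there is a constant $C_{\mathcal{Q}}>0$ such that for every $\epsilon>0$, every pure state $\sigma$ and every $f\in M_{lm}(\mathbb{R})$ with $\|f\|\leq\epsilon$, setting $b=M_{\mathcal{Q}}(\sigma)+f$, any minimizer $Y^*$ of the convex program $$\text{minimize } \|M_{\mathcal{Q}}(Y)-b\|_2\quad\text{subject to } Y\in H(d),\ Y\geq0$$ satisfies $\|Y^*-\sigma\|\leq C_{\mathcal{Q}}\,\epsilon$. Here $\|\cdot\|_2$ is the Hilbert–Schmidt (Frobenius) norm on $M_{lm}(\mathbb{R})$.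
   Context: $H(d)$ is the real vector space of $d\times d$ complex Hermitian matrices and $M_{lm}(\mathbb{R})$ the real $l\times m$ matrices. A POVM with outcome set $\{1,\dots,m\}$ is a map $j\mapsto P(j)\in H(d)$ with $P(j)\geq0$ and $\sum_j P(j)=\mathbb{1}$. The scheme induces $M_{\mathcal{Q}}:H(d)\to M_{lm}(\mathbb{R})$, $M_{\mathcal{Q}}(X)_{i,j}=\mathrm{tr}(XP_i(j))$. A state is a positive semidefinite trace-one matrix; a pure state is a rank-one state $|\psi\rangle\langle\psi|$. $\mathcal{Q}$ determines any pure state among all states if for every pure state $\sigma$ and every state $\varrho$, $M_{\mathcal{Q}}(\sigma)=M_{\mathcal{Q}}(\varrho)$ implies $\varrho=\sigma$. *)

theory Defs
  imports "HOL-Analysis.Analysis"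
begin

text \<open>d x d complex matrices, indexed by a finite type 'd (d = CARD('d)).\<close>

definition cmat_adj :: "complex^'d^'d \<Rightarrow> complex^'d^'d" where
  "cmat_adj X = (\<chi> i j. cnj (X $ j $ i))"

definition hermitian :: "complex^'d^'d \<Rightarrow> bool" where
  "hermitian X \<longleftrightarrow> cmat_adj X = X"

definition ctrace :: "complex^'d^'d \<Rightarrow> complex" where
  "ctrace X = (\<Sum>i\<in>UNIV. X $ i $ i)"

definition psd :: "complex^'d^'d \<Rightarrow> bool" where
  "psd X \<longleftrightarrow> hermitian X \<and>
     (\<forall>v::complex^'d. let q = (\<Sum>i\<in>UNIV. \<Sum>j\<in>UNIV. cnj (v $ i) * X $ i $ j * v $ j)
                        in Im q = 0 \<and> 0 \<le> Re q)"

definition is_state :: "complex^'d^'d \<Rightarrow> bool" where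
  "is_state X \<longleftrightarrow> psd X \<and> ctrace X = 1"

definition is_pure_state :: "complex^'d^'d \<Rightarrow> bool" where
  "is_pure_state X \<longleftrightarrow> is_state X \<and>
     (\<exists>\<psi>::complex^'d. norm \<psi> = 1 \<and> X = (\<chi> i j. \<psi> $ i * cnj (\<psi> $ j)))"

definition is_povm :: "('m::finite \<Rightarrow> complex^'d^'d) \<Rightarrow> bool" where
  "is_povm P \<longleftrightarrow> (\<forall>j. psd (P j)) \<and> (\<Sum>j\<in>UNIV. P j) = mat 1"

text \<open>Measurement scheme Q = {P_1..P_l}, l = CARD('l); the induced map into l x m real matrices.\<close>
definition meas_map :: "('l::finite \<Rightarrow> 'm::finite \<Rightarrow> complex^'d^'d) \<Rightarrow> complex^'d^'d \<Rightarrow> real^'m^'l" where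
  "meas_map Q X = (\<chi> i j. Re (ctrace (X ** Q i j)))"

definition determines_pure :: "('l::finite \<Rightarrow> 'm::finite \<Rightarrow> complex^'d^'d) \<Rightarrow> bool" where
  "determines_pure Q \<longleftrightarrow>
     (\<forall>\<sigma> \<rho>. is_pure_state \<sigma> \<longrightarrow> is_state \<rho> \<longrightarrow> meas_map Q \<sigma> = meas_map Q \<rho> \<longrightarrow> \<rho> = \<sigma>)"

definition is_norm_on :: "'a::real_vector set \<Rightarrow> ('a \<Rightarrow> real) \<Rightarrow> bool" where
  "is_norm_on S N \<longleftrightarrow>
     (\<forall>x\<in>S. 0 \<le> N x) \<and> (\<forall>x\<in>S. N x = 0 \<longleftrightarrow> x = 0) \<and>
     (\<forall>c x. x \<in> S \<longrightarrow> N (c *\<^sub>R x) = \<bar>c\<bar> * N x) \<and>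
     (\<forall>x\<in>S. \<forall>y\<in>S. N (x + y) \<le> N x + N y)"

definition frob :: "real^'m^'l \<Rightarrow> real" where
  "frob A = sqrt (\<Sum>i\<in>UNIV. \<Sum>j\<in>UNIV. (A $ i $ j)^2)"

definition is_minimizer :: "('l::finite \<Rightarrow> 'm::finite \<Rightarrow> complex^'d^'d) \<Rightarrow> real^'m^'l \<Rightarrow> complex^'d^'d \<Rightarrow> bool" where
  "is_minimizer Q b Y \<longleftrightarrow> psd Y \<and>
     (\<forall>Z. psd Z \<longrightarrow> frob (meas_map Q Y - b) \<le> frob (meas_map Q Z - b))"

end

theory Submission
  imports Defs
begin

text \<open>
  Write the pure state as \<open>\<sigma> = |\<psi>\<rangle>\<langle>\<psi>|\<close>. Since a minimizer \<open>Y\<close> is positive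
  semidefinite, \<open>Y - \<sigma>\<close> is positive on the orthogonal complement of \<open>\<psi>\<close>, i.e. it lies
  in the tangent cone \<open>T\<^sub>\<psi>\<close> of the positive semidefinite cone at \<open>\<sigma>\<close>.

  The measurement map is injective on every \<open>T\<^sub>\<psi>\<close>: if \<open>M\<^sub>Q X = 0\<close> then
  \<open>tr X = 0\<close>, and \<open>X\<close> has at most one negative eigenvalue. With \<open>\<phi>\<close> a unit
  eigenvector of the least eigenvalue, \<open>\<rho> = X/s + |\<phi>\<rangle>\<langle>\<phi>|\<close> is a state for large
  \<open>s\<close> with the same measurement outcomes as the pure state \<open>|\<phi>\<rangle>\<langle>\<phi>|\<close>, so
  \<open>\<rho> = |\<phi>\<rangle>\<langle>\<phi>|\<close> and \<open>X = 0\<close>. As the pairs \<open>(\<psi>, X)\<close> with unit \<open>\<psi>\<close>,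
  unit \<open>X\<close> and \<open>X \<in> T\<^sub>\<psi>\<close> form a compact set, \<open>\<parallel>M\<^sub>Q X\<parallel> \<ge> c \<parallel>X\<parallel>\<close> on all
  tangent cones with one \<open>c > 0\<close>.

  Minimality of \<open>Y\<close> (compare with the candidate \<open>\<sigma>\<close>) gives
  \<open>\<parallel>M\<^sub>Q (Y - \<sigma>)\<parallel> \<le> 2 \<parallel>f\<parallel>\<close>; equivalence of norms in finite dimension finishes.
\<close>

section \<open>Norms on finite-dimensional spaces\<close>

lemma is_norm_on_nonneg: "is_norm_on S N \<Longrightarrow> x \<in> S \<Longrightarrow> 0 \<le> N x"
  by (simp add: is_norm_on_def)

lemma is_norm_on_eq_0_iff: "is_norm_on S N \<Longrightarrow> x \<in> S \<Longrightarrow> N x = 0 \<longleftrightarrow> x = 0"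
  by (simp add: is_norm_on_def)

lemma is_norm_on_scaleR: "is_norm_on S N \<Longrightarrow> x \<in> S \<Longrightarrow> N (c *\<^sub>R x) = \<bar>c\<bar> * N x"
  by (simp add: is_norm_on_def)

lemma is_norm_on_triangle: "is_norm_on S N \<Longrightarrow> x \<in> S \<Longrightarrow> y \<in> S \<Longrightarrow> N (x + y) \<le> N x + N y"
  by (simp add: is_norm_on_def)

lemma is_norm_on_sum_le:
  assumes "subspace S" "is_norm_on S N" "finite A" "\<And>a. a \<in> A \<Longrightarrow> f a \<in> S"
  shows "N (\<Sum>a\<in>A. f a) \<le> (\<Sum>a\<in>A. N (f a))"
  using assms(3,4)
proof (induction A rule: finite_induct)
  case empty
  show ?case
    using is_norm_on_scaleR[OF assms(2) subspace_0[OF assms(1)], of 0] by simp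
next
  case (insert a A)
  have "N (f a + (\<Sum>a\<in>A. f a)) \<le> N (f a) + N (\<Sum>a\<in>A. f a)"
    using insert.prems by (intro is_norm_on_triangle[OF assms(2)] subspace_sum[OF assms(1)]) auto
  with insert show ?case by simp
qed

lemma is_norm_on_le_norm:
  fixes N :: "'a::euclidean_space \<Rightarrow> real"
  assumes S: "subspace S" and N: "is_norm_on S N"
  shows "\<exists>K. \<forall>x\<in>S. N x \<le> K * norm x"
proof -
  obtain B where BS: "B \<subseteq> S" and orth: "pairwise orthogonal B"
    and unit: "\<And>v. v \<in> B \<Longrightarrow> norm v = 1" and indep: "independent B" and span: "span B = S"
    using orthonormal_basis_subspace[OF S] by metis
  have fin: "finite B" using indep by (rule independent_imp_finite)
  have "N x \<le> (\<Sum>v\<in>B. N v) * norm x" if x: "x \<in> S" for x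
  proof -
    have "N x = N (\<Sum>v\<in>B. (x \<bullet> v) *\<^sub>R v)"
      using orthonormal_basis_expand[OF orth unit _ fin] x span by simp
    also have "\<dots> \<le> (\<Sum>v\<in>B. N ((x \<bullet> v) *\<^sub>R v))"
      using BS by (intro is_norm_on_sum_le[OF S N fin] subspace_scale[OF S]) auto
    also have "\<dots> = (\<Sum>v\<in>B. \<bar>x \<bullet> v\<bar> * N v)"
      using BS by (intro sum.cong refl is_norm_on_scaleR[OF N]) auto
    also have "\<dots> \<le> (\<Sum>v\<in>B. norm x * N v)"
    proof (intro sum_mono mult_right_mono)
      fix v assume "v \<in> B"
      then show "\<bar>x \<bullet> v\<bar> \<le> norm x" "0 \<le> N v"
        using Cauchy_Schwarz_ineq2[of x v] unit BS is_norm_on_nonneg[OF N] by auto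
    qed
    finally show ?thesis by (simp add: sum_distrib_left mult.commute)
  qed
  then show ?thesis by blast
qed

lemma is_norm_on_ge_norm:
  fixes N :: "'a::euclidean_space \<Rightarrow> real"
  assumes N: "is_norm_on UNIV N"
  shows "\<exists>c>0. \<forall>x. c * norm x \<le> N x"
proof -
  obtain K where K: "\<And>x. N x \<le> K * norm x"
    using is_norm_on_le_norm[OF subspace_UNIV N] by blast
  have "K \<ge> 0"
  proof -
    obtain b :: 'a where "b \<in> Basis" using nonempty_Basis by blast
    then show ?thesis using K[of b] is_norm_on_nonneg[OF N, of b] by simp
  qed
  have "\<bar>N x - N y\<bar> \<le> K * norm (x - y)" for x y
  proof -
    have "N x \<le> N y + N (x - y)" "N y \<le> N x + N (y - x)"
      using is_norm_on_triangle[OF N, of y "x - y"] is_norm_on_triangle[OF N, of x "y - x"]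
      by simp_all
    moreover have "N (y - x) = N (x - y)"
      using is_norm_on_scaleR[OF N, of "x - y" "-1"] by simp
    ultimately show ?thesis using K[of "x - y"] by linarith
  qed
  then have "K-lipschitz_on UNIV N"
    using \<open>K \<ge> 0\<close> by (intro lipschitz_onI) (simp_all add: dist_norm dist_real_def)
  then have cont: "continuous_on (sphere 0 1) N"
    by (rule continuous_on_subset[OF lipschitz_on_continuous_on]) simp
  obtain x0 :: 'a where x0: "norm x0 = 1" and min: "\<And>y. norm y = 1 \<Longrightarrow> N x0 \<le> N y"
    using continuous_attains_inf[OF compact_sphere _ cont] by auto
  have "x0 \<noteq> 0" using x0 by auto
  then have "0 < N x0"
    using is_norm_on_nonneg[OF N, of x0] is_norm_on_eq_0_iff[OF N, of x0] by simp
  moreover have "N x0 * norm x \<le> N x" for x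
  proof (cases "x = 0")
    case False
    have "N x0 \<le> N ((1 / norm x) *\<^sub>R x)" using min False by simp
    also have "\<dots> = N x / norm x" using is_norm_on_scaleR[OF N] by simp
    finally show ?thesis using False by (simp add: le_divide_eq)
  qed (simp add: is_norm_on_nonneg[OF N])
  ultimately show ?thesis by blast
qed

section \<open>Sesquilinear calculus on complex vectors\<close>

definition cinner :: "complex^'d \<Rightarrow> complex^'d \<Rightarrow> complex" where
  "cinner u v = (\<Sum>i\<in>UNIV. cnj (u $ i) * v $ i)"

definition quad_form :: "complex^'d^'d \<Rightarrow> complex^'d \<Rightarrow> complex" where
  "quad_form X v = cinner v (X *v v)"

definition outer_prod :: "complex^'d \<Rightarrow> complex^'d^'d" where
  "outer_prod p = (\<chi> i j. p $ i * cnj (p $ j))"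

lemma of_real_scalar_mult: "(of_real r :: complex) *s v = r *\<^sub>R v"
  by (simp add: vec_eq_iff scaleR_conv_of_real[where 'a=complex])

lemma cinner_add_left: "cinner (u + w) v = cinner u v + cinner w v"
  by (simp add: cinner_def sum.distrib algebra_simps)

lemma cinner_add_right: "cinner u (v + w) = cinner u v + cinner u w"
  by (simp add: cinner_def sum.distrib algebra_simps)

lemma cinner_diff_left: "cinner (u - w) v = cinner u v - cinner w v"
  by (simp add: cinner_def sum_subtractf algebra_simps)

lemma cinner_diff_right: "cinner u (v - w) = cinner u v - cinner u w"
  by (simp add: cinner_def sum_subtractf algebra_simps)

lemma cinner_scale_left: "cinner (c *s u) v = cnj c * cinner u v"
  by (simp add: cinner_def sum_distrib_left algebra_simps)

lemma cinner_scale_right: "cinner u (c *s v) = c * cinner u v"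
  by (simp add: cinner_def sum_distrib_left algebra_simps)

lemma cnj_cinner: "cnj (cinner u v) = cinner v u"
  by (simp add: cinner_def mult.commute)

lemma cinner_self: "cinner v v = of_real ((norm v)\<^sup>2)"
proof -
  have "cinner v v = (\<Sum>i\<in>UNIV. of_real ((cmod (v $ i))\<^sup>2))"
    unfolding cinner_def by (intro sum.cong refl) (metis complex_norm_square mult.commute)
  also have "\<dots> = of_real ((norm v)\<^sup>2)"
    by (simp add: norm_vec_def L2_set_def sum_nonneg)
  finally show ?thesis .
qed

lemma hermitian_iff_entries: "hermitian X \<longleftrightarrow> (\<forall>i j. cnj (X $ i $ j) = X $ j $ i)"
  unfolding hermitian_def cmat_adj_def vec_eq_iff by auto

lemma hermitian_add: "hermitian X \<Longrightarrow> hermitian Y \<Longrightarrow> hermitian (X + Y)"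
  by (simp add: hermitian_iff_entries)

lemma hermitian_diff: "hermitian X \<Longrightarrow> hermitian Y \<Longrightarrow> hermitian (X - Y)"
  by (simp add: hermitian_iff_entries)

lemma hermitian_scaleR: "hermitian X \<Longrightarrow> hermitian (r *\<^sub>R X)"
  by (simp add: hermitian_iff_entries)

lemma hermitian_outer_prod: "hermitian (outer_prod p)"
  by (simp add: hermitian_iff_entries outer_prod_def mult.commute)

lemma subspace_hermitian: "subspace {X :: complex^'d^'d. hermitian X}"
  by (simp add: subspace_def hermitian_add hermitian_scaleR) (simp add: hermitian_iff_entries)

lemma hermitian_cinner:
  assumes "hermitian X"
  shows "cinner u (X *v v) = cinner (X *v u) v"
proof -
  have "cinner (X *v u) v = (\<Sum>i\<in>UNIV. \<Sum>j\<in>UNIV. cnj (X $ i $ j) * cnj (u $ j) * v $ i)"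
    by (simp add: cinner_def matrix_vector_mult_def cnj_sum sum_distrib_right)
  also have "\<dots> = (\<Sum>j\<in>UNIV. \<Sum>i\<in>UNIV. cnj (X $ i $ j) * cnj (u $ j) * v $ i)"
    by (rule sum.swap)
  also have "\<dots> = cinner u (X *v v)"
    using assms unfolding hermitian_iff_entries
    by (simp add: cinner_def matrix_vector_mult_def sum_distrib_left mult_ac)
  finally show ?thesis by simp
qed

lemma quad_form_eq_sum: "(\<Sum>i\<in>UNIV. \<Sum>j\<in>UNIV. cnj (v $ i) * X $ i $ j * v $ j) = quad_form X v"
  by (simp add: quad_form_def cinner_def matrix_vector_mult_def sum_distrib_left mult.assoc)

lemma quad_form_real: "hermitian X \<Longrightarrow> quad_form X v = of_real (Re (quad_form X v))"
  using cnj_cinner[of v "X *v v"] hermitian_cinner[of X v v]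
  by (simp add: quad_form_def complex_eq_iff)

lemma psd_iff_quad_form: "psd X \<longleftrightarrow> hermitian X \<and> (\<forall>v. 0 \<le> Re (quad_form X v))"
  unfolding psd_def quad_form_eq_sum Let_def by (metis Im_complex_of_real quad_form_real)

lemma quad_form_add: "quad_form (X + Y) v = quad_form X v + quad_form Y v"
  by (simp add: quad_form_def matrix_vector_mult_add_rdistrib cinner_add_right)

lemma quad_form_diff: "quad_form (X - Y) v = quad_form X v - quad_form Y v"
  by (simp add: quad_form_def matrix_vector_mult_diff_rdistrib cinner_diff_right)

lemma quad_form_scaleR: "quad_form (r *\<^sub>R X) v = r *\<^sub>R quad_form X v"
proof -
  have "(r *\<^sub>R X) *v v = of_real r *s (X *v v)"
    by (simp add: matrix_vector_mult_def vec_eq_iff sum_distrib_left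
        scaleR_conv_of_real[where 'a=complex] mult_ac)
  then show ?thesis
    by (simp add: quad_form_def cinner_scale_right scaleR_conv_of_real[where 'a=complex])
qed

lemma quad_form_scale: "quad_form X (c *s v) = cnj c * c * quad_form X v"
  by (simp add: quad_form_def vector_scalar_commute cinner_scale_left cinner_scale_right)

lemma quad_form_add_vec:
  "quad_form X (u + w) = quad_form X u + quad_form X w + cinner u (X *v w) + cinner w (X *v u)"
  by (simp add: quad_form_def matrix_vector_right_distrib cinner_add_left cinner_add_right)

lemma quad_form_outer_prod: "quad_form (outer_prod p) v = of_real ((cmod (cinner p v))\<^sup>2)"
proof -
  have "outer_prod p *v v = cinner p v *s p"
    by (simp add: outer_prod_def matrix_vector_mult_def vec_eq_iff cinner_def sum_distrib_left mult_ac)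
  then have "quad_form (outer_prod p) v = cinner p v * cnj (cinner p v)"
    by (simp add: quad_form_def cinner_scale_right cnj_cinner)
  then show ?thesis by (simp only: complex_norm_square)
qed

lemma continuous_on_quad_form: "continuous_on S (\<lambda>v. Re (quad_form X v))"
  unfolding quad_form_eq_sum[symmetric] by (intro continuous_intros)

lemma psd_scaleR: "psd X \<Longrightarrow> 0 \<le> r \<Longrightarrow> psd (r *\<^sub>R X)"
  by (simp add: psd_iff_quad_form hermitian_scaleR quad_form_scaleR)

lemma psd_outer_prod: "psd (outer_prod p)"
  by (simp add: psd_iff_quad_form hermitian_outer_prod quad_form_outer_prod)

lemma ctrace_add: "ctrace (X + Y) = ctrace X + ctrace Y"
  by (simp add: ctrace_def sum.distrib)

lemma ctrace_scaleR: "ctrace (r *\<^sub>R X) = r *\<^sub>R ctrace X"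
  by (simp add: ctrace_def scaleR_sum_right)

lemma ctrace_outer_prod: "ctrace (outer_prod p) = of_real ((norm p)\<^sup>2)"
  using cinner_self[of p] by (simp add: ctrace_def outer_prod_def cinner_def mult.commute)

lemma is_pure_state_outer_prod: "norm p = 1 \<Longrightarrow> is_pure_state (outer_prod p)"
  unfolding is_pure_state_def is_state_def
  using psd_outer_prod[of p] ctrace_outer_prod[of p] by (auto simp: outer_prod_def)

lemma Im_ctrace_hermitian:
  assumes "hermitian X"
  shows "Im (ctrace X) = 0"
proof -
  have "Im (X $ i $ i) = 0" for i
    using arg_cong[OF assms[unfolded hermitian_iff_entries, rule_format, of i i], of Im] by simp
  then show ?thesis by (simp add: ctrace_def)
qed

section \<open>The measurement map\<close>

lemma meas_map_add: "meas_map Q (X + Y) = meas_map Q X + meas_map Q Y"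
  by (simp add: meas_map_def ctrace_def matrix_matrix_mult_def vec_eq_iff sum.distrib distrib_right)

lemma meas_map_scaleR: "meas_map Q (r *\<^sub>R X) = r *\<^sub>R meas_map Q X"
  by (simp add: meas_map_def ctrace_def matrix_matrix_mult_def vec_eq_iff sum_distrib_left
      scaleR_conv_of_real[where 'a=complex] mult.assoc)

lemma linear_meas_map: "linear (meas_map Q)"
  by (rule linearI) (simp_all add: meas_map_add meas_map_scaleR)

lemma meas_map_diff: "meas_map Q (X - Y) = meas_map Q X - meas_map Q Y"
  by (rule linear_diff[OF linear_meas_map])

lemma ctrace_mult_sum_right:
  "finite A \<Longrightarrow> ctrace (X ** (\<Sum>j\<in>A. P j)) = (\<Sum>j\<in>A. ctrace (X ** P j))"
proof (induction A rule: finite_induct)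
  case empty
  then show ?case by (simp add: ctrace_def matrix_matrix_mult_def)
next
  case (insert a A)
  then show ?case by (simp add: matrix_add_ldistrib ctrace_def sum.distrib)
qed

lemma sum_meas_map_row:
  assumes "is_povm (Q i)"
  shows "(\<Sum>j\<in>UNIV. meas_map Q X $ i $ j) = Re (ctrace X)"
proof -
  have "(\<Sum>j\<in>UNIV. meas_map Q X $ i $ j) = Re (\<Sum>j\<in>UNIV. ctrace (X ** Q i j))"
    by (simp add: meas_map_def)
  also have "\<dots> = Re (ctrace X)"
    using assms by (simp add: is_povm_def ctrace_mult_sum_right[symmetric])
  finally show ?thesis .
qed

lemma ctrace_eq_0_if_meas_map_eq_0:
  assumes "hermitian X" "\<forall>i. is_povm (Q i)" "meas_map Q X = 0"
  shows "ctrace X = 0"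
  using sum_meas_map_row[of Q _ X] Im_ctrace_hermitian[OF assms(1)] assms(2,3)
  by (simp add: complex_eq_iff)

section \<open>Least eigenvalue of a Hermitian matrix\<close>

lemma quad_form_min_on_sphere:
  fixes X :: "complex^'d^'d"
  shows "\<exists>\<phi>. norm \<phi> = 1 \<and> (\<forall>v. Re (quad_form X \<phi>) * (norm v)\<^sup>2 \<le> Re (quad_form X v))"
proof -
  obtain \<phi> :: "complex^'d" where \<phi>: "norm \<phi> = 1"
    and min: "\<And>w. norm w = 1 \<Longrightarrow> Re (quad_form X \<phi>) \<le> Re (quad_form X w)"
    using continuous_attains_inf[OF compact_sphere _ continuous_on_quad_form[of _ X], of 0 1] by auto
  have "Re (quad_form X \<phi>) * (norm v)\<^sup>2 \<le> Re (quad_form X v)" for v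
  proof (cases "v = 0")
    case False
    define c where "c = complex_of_real (1 / norm v)"
    have "norm (c *s v) = 1"
      using False unfolding c_def of_real_scalar_mult by simp
    then have "Re (quad_form X \<phi>) \<le> Re (quad_form X (c *s v))" by (rule min)
    also have "\<dots> = Re (quad_form X v) / (norm v)\<^sup>2"
      by (simp add: quad_form_scale c_def power2_eq_square)
    finally show ?thesis using False by (simp add: pos_le_divide_eq)
  qed (simp add: quad_form_def cinner_def)
  with \<phi> show ?thesis by blast
qed

lemma quadratic_nonneg_imp_linear_coeff_eq_0:
  fixes a b :: real
  assumes "\<And>t. 0 \<le> 2 * t * a + t\<^sup>2 * b"
  shows "a = 0"
proof (rule ccontr)
  assume "a \<noteq> 0"
  define c where "c = \<bar>b\<bar> + 1"
  have "c > 0" "b - 2 * c < 0" by (simp_all add: c_def)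
  have "0 \<le> 2 * (- a / c) * a + (- a / c)\<^sup>2 * b" by (rule assms)
  also have "\<dots> = a\<^sup>2 * (b - 2 * c) / c\<^sup>2"
    using \<open>c > 0\<close> by (simp add: field_simps power2_eq_square)
  also have "\<dots> < 0"
    using \<open>a \<noteq> 0\<close> \<open>c > 0\<close> \<open>b - 2 * c < 0\<close> by (simp add: divide_neg_pos mult_pos_neg)
  finally show False by simp
qed

lemma rayleigh_minimizer_eigenvector:
  fixes X :: "complex^'d^'d"
  assumes herm: "hermitian X" and \<phi>: "norm \<phi> = 1"
    and min: "\<And>v. Re (quad_form X \<phi>) * (norm v)\<^sup>2 \<le> Re (quad_form X v)"
  shows "X *v \<phi> = of_real (Re (quad_form X \<phi>)) *s \<phi>"
proof -
  define \<mu> where "\<mu> = Re (quad_form X \<phi>)"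
  define r where "r = X *v \<phi> - of_real \<mu> *s \<phi>"
  have \<phi>\<phi>: "cinner \<phi> \<phi> = 1" using \<phi> by (simp add: cinner_self)
  have q\<phi>: "quad_form X \<phi> = of_real \<mu>" unfolding \<mu>_def by (rule quad_form_real[OF herm])
  have X\<phi>: "X *v \<phi> = r + of_real \<mu> *s \<phi>" by (simp add: r_def)
  have r\<phi>: "cinner r \<phi> = 0"
    using q\<phi> \<phi>\<phi> hermitian_cinner[OF herm, of \<phi> \<phi>]
    by (simp add: r_def quad_form_def cinner_diff_left cinner_scale_left)
  then have \<phi>r: "cinner \<phi> r = 0" using cnj_cinner[of r \<phi>] by simp
  have rX\<phi>: "cinner r (X *v \<phi>) = cinner r r"
    by (simp add: X\<phi> cinner_add_right cinner_scale_right r\<phi>)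
  have \<phi>Xr: "cinner \<phi> (X *v r) = cinner r r"
    by (simp add: hermitian_cinner[OF herm] X\<phi> cinner_add_left cinner_scale_left \<phi>r)
  define a where "a = Re (cinner r r)"
  define b where "b = Re (quad_form X r)"
  have a: "a = (norm r)\<^sup>2" by (simp add: a_def cinner_self)
  have "0 \<le> 2 * t * a + t\<^sup>2 * (b - \<mu> * a)" for t
  proof -
    define v where "v = \<phi> + of_real t *s r"
    have "quad_form X v = quad_form X \<phi> + cnj (of_real t) * of_real t * quad_form X r
        + of_real t * cinner \<phi> (X *v r) + cnj (of_real t) * cinner r (X *v \<phi>)"
      unfolding v_def quad_form_add_vec quad_form_scale
      by (simp only: vector_scalar_commute cinner_scale_left cinner_scale_right)
    also have "\<dots> = of_real \<mu> + of_real (t\<^sup>2) * quad_form X r + 2 * of_real t * cinner r r"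
      by (simp add: q\<phi> rX\<phi> \<phi>Xr power2_eq_square)
    finally have "Re (quad_form X v) = \<mu> + t\<^sup>2 * b + 2 * t * a" by (simp add: a_def b_def)
    moreover have "cinner v v = 1 + of_real (t\<^sup>2) * cinner r r"
      unfolding v_def
      by (simp add: cinner_add_left cinner_add_right cinner_scale_left cinner_scale_right
          \<phi>\<phi> r\<phi> \<phi>r power2_eq_square)
    then have "Re (cinner v v) = 1 + t\<^sup>2 * a" by (simp add: a_def)
    then have "(norm v)\<^sup>2 = 1 + t\<^sup>2 * a" by (simp add: cinner_self)
    ultimately show ?thesis using min[of v] by (simp add: \<mu>_def[symmetric] algebra_simps)
  qed
  then have "a = 0" by (rule quadratic_nonneg_imp_linear_coeff_eq_0)
  then have "r = 0" by (simp add: a)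
  then show ?thesis by (simp add: X\<phi> \<mu>_def)
qed

lemma hermitian_min_eigenpair:
  fixes X :: "complex^'d^'d"
  assumes "hermitian X"
  obtains \<phi> \<mu> where "norm \<phi> = 1" "X *v \<phi> = of_real \<mu> *s \<phi>"
    "\<And>v. \<mu> * (norm v)\<^sup>2 \<le> Re (quad_form X v)"
  using quad_form_min_on_sphere[of X] rayleigh_minimizer_eigenvector[OF assms] by metis

section \<open>Injectivity on tangent cones\<close>

text \<open>
  For a unit vector \<open>\<psi>\<close> these are the Hermitian matrices positive on \<open>\<psi>\<^sup>\<bottom>\<close>.
  Quantifying over the projections \<open>v - \<langle>\<psi>, v\<rangle> \<psi>\<close> rather than over \<open>v \<perp> \<psi>\<close> turns
  closedness in the pair \<open>(\<psi>, X)\<close> into a matter of continuity.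
\<close>
definition tangent_cone :: "complex^'d \<Rightarrow> (complex^'d^'d) set" where
  "tangent_cone \<psi> = {X. hermitian X \<and> (\<forall>v. 0 \<le> Re (quad_form X (v - cinner \<psi> v *s \<psi>)))}"

lemma tangent_cone_nonneg_orth:
  "X \<in> tangent_cone \<psi> \<Longrightarrow> cinner \<psi> w = 0 \<Longrightarrow> 0 \<le> Re (quad_form X w)"
  unfolding tangent_cone_def by (auto dest: spec[of _ w])

lemma tangent_cone_scaleR: "X \<in> tangent_cone \<psi> \<Longrightarrow> 0 \<le> r \<Longrightarrow> r *\<^sub>R X \<in> tangent_cone \<psi>"
  unfolding tangent_cone_def by (simp add: hermitian_scaleR quad_form_scaleR)

lemma psd_diff_outer_prod_in_tangent_cone:
  assumes "psd Y" "norm p = 1"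
  shows "Y - outer_prod p \<in> tangent_cone p"
proof -
  have "cinner p (v - cinner p v *s p) = 0" for v
    using assms(2) by (simp add: cinner_diff_right cinner_scale_right cinner_self)
  then show ?thesis
    using assms(1) unfolding tangent_cone_def psd_iff_quad_form
    by (simp add: hermitian_diff hermitian_outer_prod quad_form_diff quad_form_outer_prod)
qed

lemma Re_quad_form_scale: "Re (quad_form X (c *s v)) = (cmod c)\<^sup>2 * Re (quad_form X v)"
proof -
  have "cnj c * c = of_real ((cmod c)\<^sup>2)" by (metis complex_norm_square mult.commute)
  then show ?thesis by (simp add: quad_form_scale)
qed

lemma Re_quad_form_eigen_orth_split:
  assumes herm: "hermitian X" and \<phi>: "norm \<phi> = 1" and eig: "X *v \<phi> = of_real \<mu> *s \<phi>"
    and orth: "cinner \<phi> u = 0"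
  shows "Re (quad_form X (a *s \<phi> + u)) = (cmod a)\<^sup>2 * \<mu> + Re (quad_form X u)"
proof -
  have "cinner \<phi> \<phi> = 1" using \<phi> by (simp add: cinner_self)
  then have "quad_form X \<phi> = of_real \<mu>" by (simp add: quad_form_def eig cinner_scale_right)
  moreover have "cinner (a *s \<phi>) (X *v u) = 0"
    by (simp add: hermitian_cinner[OF herm] vector_scalar_commute eig cinner_scale_left orth)
  moreover have "cinner u (X *v (a *s \<phi>)) = 0"
    using cnj_cinner[of \<phi> u] orth by (simp add: vector_scalar_commute eig cinner_scale_right)
  ultimately show ?thesis by (simp add: quad_form_add_vec Re_quad_form_scale)
qed

lemma negative_eigenvector_nonneg_orth:
  assumes herm: "hermitian X" and cone: "X \<in> tangent_cone \<psi>" and \<phi>: "norm \<phi> = 1"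
    and eig: "X *v \<phi> = of_real \<mu> *s \<phi>" and neg: "\<mu> < 0" and orth: "cinner \<phi> u = 0"
  shows "0 \<le> Re (quad_form X u)"
proof (rule ccontr)
  assume u_neg: "\<not> 0 \<le> Re (quad_form X u)"
  define \<alpha> where "\<alpha> = cinner \<psi> u"
  define \<beta> where "\<beta> = - cinner \<psi> \<phi>"
  \<comment> \<open>\<open>\<alpha> \<phi> + \<beta> u \<perp> \<psi>\<close>, so \<open>\<phi>\<close> and \<open>u\<close> cannot both be negative directions of \<open>X\<close>\<close>
  have "cinner \<psi> (\<alpha> *s \<phi> + \<beta> *s u) = 0"
    by (simp add: \<alpha>_def \<beta>_def cinner_add_right cinner_diff_right cinner_scale_right algebra_simps)
  then have "0 \<le> Re (quad_form X (\<alpha> *s \<phi> + \<beta> *s u))"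
    by (rule tangent_cone_nonneg_orth[OF cone])
  also have "\<dots> = (cmod \<alpha>)\<^sup>2 * \<mu> + (cmod \<beta>)\<^sup>2 * Re (quad_form X u)"
    using orth by (simp add: Re_quad_form_eigen_orth_split[OF herm \<phi> eig] cinner_scale_right
        Re_quad_form_scale)
  finally have "0 \<le> (cmod \<alpha>)\<^sup>2 * \<mu> + (cmod \<beta>)\<^sup>2 * Re (quad_form X u)" .
  moreover have "(cmod \<alpha>)\<^sup>2 * \<mu> \<le> 0" using neg by (simp add: mult_nonneg_nonpos)
  ultimately have "0 \<le> (cmod \<beta>)\<^sup>2 * Re (quad_form X u)" by linarith
  then have "\<beta> = 0" using u_neg by (simp add: zero_le_mult_iff)
  then have "0 \<le> Re (quad_form X \<phi>)"
    using tangent_cone_nonneg_orth[OF cone] by (simp add: \<beta>_def)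
  moreover have "cinner \<phi> \<phi> = 1" using \<phi> by (simp add: cinner_self)
  ultimately show False using neg by (simp add: quad_form_def eig cinner_scale_right)
qed

lemma psd_add_outer_prod_min_eigenvector:
  assumes herm: "hermitian X" and cone: "X \<in> tangent_cone \<psi>" and \<phi>: "norm \<phi> = 1"
    and eig: "X *v \<phi> = of_real \<mu> *s \<phi>" and min: "\<And>v. \<mu> * (norm v)\<^sup>2 \<le> Re (quad_form X v)"
    and s: "0 \<le> s" "- \<mu> \<le> s"
  shows "psd (X + s *\<^sub>R outer_prod \<phi>)"
  unfolding psd_iff_quad_form
proof (intro conjI allI)
  show "hermitian (X + s *\<^sub>R outer_prod \<phi>)"
    by (intro hermitian_add herm hermitian_scaleR hermitian_outer_prod)
  fix v
  have "Re (quad_form (X + s *\<^sub>R outer_prod \<phi>) v) = Re (quad_form X v) + s * (cmod (cinner \<phi> v))\<^sup>2"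
    by (simp add: quad_form_add quad_form_scaleR quad_form_outer_prod)
  moreover have "0 \<le> Re (quad_form X v) + s * (cmod (cinner \<phi> v))\<^sup>2"
  proof (cases "0 \<le> \<mu>")
    case True
    then have "0 \<le> \<mu> * (norm v)\<^sup>2" by simp
    then have "0 \<le> Re (quad_form X v)" using min[of v] by linarith
    moreover have "0 \<le> s * (cmod (cinner \<phi> v))\<^sup>2" using s by simp
    ultimately show ?thesis by linarith
  next
    case False
    define a where "a = cinner \<phi> v"
    define u where "u = v - a *s \<phi>"
    have "cinner \<phi> \<phi> = 1" using \<phi> by (simp add: cinner_self)
    then have orth: "cinner \<phi> u = 0" by (simp add: u_def a_def cinner_diff_right cinner_scale_right)
    have "Re (quad_form X v) = (cmod a)\<^sup>2 * \<mu> + Re (quad_form X u)"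
      using Re_quad_form_eigen_orth_split[OF herm \<phi> eig orth, of a] by (simp add: u_def)
    moreover have "0 \<le> Re (quad_form X u)"
      using False by (intro negative_eigenvector_nonneg_orth[OF herm cone \<phi> eig _ orth]) simp
    moreover have "0 \<le> (cmod a)\<^sup>2 * (\<mu> + s)" using s by simp
    ultimately show ?thesis by (simp add: a_def algebra_simps)
  qed
  ultimately show "0 \<le> Re (quad_form (X + s *\<^sub>R outer_prod \<phi>) v)" by simp
qed

lemma tangent_cone_meas_map_eq_0:
  fixes Q :: "'l::finite \<Rightarrow> 'm::finite \<Rightarrow> complex^'d::finite^'d"
  assumes povm: "\<forall>i. is_povm (Q i)" and det: "determines_pure Q"
    and cone: "X \<in> tangent_cone \<psi>" and M: "meas_map Q X = 0"
  shows "X = 0"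
proof -
  have herm: "hermitian X" using cone by (simp add: tangent_cone_def)
  obtain \<phi> \<mu> where \<phi>: "norm \<phi> = 1" and eig: "X *v \<phi> = of_real \<mu> *s \<phi>"
    and min: "\<And>v. \<mu> * (norm v)\<^sup>2 \<le> Re (quad_form X v)"
    using hermitian_min_eigenpair[OF herm] by blast
  define s where "s = max 1 (- \<mu>)"
  have "s > 0" by (simp add: s_def)
  define \<rho> where "\<rho> = (1 / s) *\<^sub>R X + outer_prod \<phi>"
  have "psd (X + s *\<^sub>R outer_prod \<phi>)"
    by (rule psd_add_outer_prod_min_eigenvector[OF herm cone \<phi> eig min]) (simp_all add: s_def)
  then have "psd \<rho>"
    using psd_scaleR[of _ "1 / s"] \<open>s > 0\<close> by (fastforce simp: \<rho>_def scaleR_add_right)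
  moreover have "ctrace \<rho> = 1"
    using ctrace_eq_0_if_meas_map_eq_0[OF herm povm M] \<phi>
    by (simp add: \<rho>_def ctrace_add ctrace_scaleR ctrace_outer_prod)
  moreover have "meas_map Q \<rho> = meas_map Q (outer_prod \<phi>)"
    by (simp add: \<rho>_def meas_map_add meas_map_scaleR M)
  ultimately have "\<rho> = outer_prod \<phi>"
    using det is_pure_state_outer_prod[OF \<phi>] unfolding determines_pure_def is_state_def by metis
  then show "X = 0" using \<open>s > 0\<close> by (simp add: \<rho>_def)
qed

section \<open>Stability\<close>

lemma compact_unit_tangent_cone:
  "compact {(\<psi>, X). norm \<psi> = 1 \<and> norm X = 1 \<and> X \<in> tangent_cone (\<psi> :: complex^'d)}"
proof (rule compact_eq_bounded_closed[THEN iffD2], rule conjI)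
  have "{(\<psi>, X). norm \<psi> = 1 \<and> norm X = 1 \<and> X \<in> tangent_cone (\<psi> :: complex^'d)}
      \<subseteq> sphere 0 1 \<times> sphere 0 1"
    by auto
  then show "bounded {(\<psi>, X). norm \<psi> = 1 \<and> norm X = 1 \<and> X \<in> tangent_cone (\<psi> :: complex^'d)}"
    by (rule bounded_subset[OF bounded_Times[OF bounded_sphere bounded_sphere]])
  show "closed {(\<psi>, X). norm \<psi> = 1 \<and> norm X = 1 \<and> X \<in> tangent_cone (\<psi> :: complex^'d)}"
    unfolding tangent_cone_def hermitian_iff_entries quad_form_eq_sum[symmetric] cinner_def
      vector_minus_component vector_smult_component split_def mem_Collect_eq
    by (intro closed_Collect_conj closed_Collect_all closed_Collect_eq closed_Collect_le
        continuous_intros)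
qed

lemma tangent_cone_meas_map_lower_bound:
  fixes Q :: "'l::finite \<Rightarrow> 'm::finite \<Rightarrow> complex^'d::finite^'d"
  assumes povm: "\<forall>i. is_povm (Q i)" and det: "determines_pure Q"
  shows "\<exists>c>0. \<forall>\<psi> X. norm \<psi> = 1 \<longrightarrow> X \<in> tangent_cone \<psi> \<longrightarrow> c * norm X \<le> norm (meas_map Q X)"
proof -
  define K where "K = {(\<psi>, X). norm \<psi> = 1 \<and> norm X = 1 \<and> X \<in> tangent_cone (\<psi> :: complex^'d)}"
  have "compact K" unfolding K_def by (rule compact_unit_tangent_cone)
  have "bounded_linear (meas_map Q)"
    using linear_meas_map by (simp add: linear_conv_bounded_linear)
  then have "continuous_on K (\<lambda>z. norm (meas_map Q (snd z)))"
    by (intro continuous_on_norm bounded_linear.continuous_on[OF _ continuous_on_snd])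
      (simp_all add: continuous_on_id)
  then obtain c where c: "c > 0" and min: "\<And>z. z \<in> K \<Longrightarrow> c \<le> norm (meas_map Q (snd z))"
  proof (cases "K = {}")
    case False
    assume cont: "continuous_on K (\<lambda>z. norm (meas_map Q (snd z)))"
    obtain z0 where z0: "z0 \<in> K"
      and z0_min: "\<And>z. z \<in> K \<Longrightarrow> norm (meas_map Q (snd z0)) \<le> norm (meas_map Q (snd z))"
      using continuous_attains_inf[OF \<open>compact K\<close> False cont] by blast
    have "meas_map Q (snd z0) \<noteq> 0"
      using z0 tangent_cone_meas_map_eq_0[OF povm det, of "snd z0" "fst z0"] by (auto simp: K_def)
    then show thesis using that[of "norm (meas_map Q (snd z0))"] z0_min by simp
  qed (auto intro: that[of 1])
  show ?thesis
  proof (intro exI[of _ c] conjI allI impI c)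
    fix \<psi> :: "complex^'d" and X assume \<psi>: "norm \<psi> = 1" and cone: "X \<in> tangent_cone \<psi>"
    show "c * norm X \<le> norm (meas_map Q X)"
    proof (cases "X = 0")
      case False
      then have "(\<psi>, (1 / norm X) *\<^sub>R X) \<in> K"
        using \<psi> tangent_cone_scaleR[OF cone] by (simp add: K_def)
      then have "c \<le> norm (meas_map Q X) / norm X"
        using min by (fastforce simp: meas_map_scaleR)
      then show ?thesis using False by (simp add: pos_le_divide_eq)
    qed simp
  qed
qed

lemma frob_eq_norm: "frob A = norm A"
  by (simp add: frob_def norm_vec_def L2_set_def sum_nonneg)

lemma minimizer_meas_map_error:
  assumes "is_minimizer Q (meas_map Q \<sigma> + f) Y" and "psd \<sigma>"
  shows "norm (meas_map Q (Y - \<sigma>)) \<le> 2 * norm f"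
proof -
  have "frob (meas_map Q Y - (meas_map Q \<sigma> + f)) \<le> frob (meas_map Q \<sigma> - (meas_map Q \<sigma> + f))"
    using assms unfolding is_minimizer_def by blast
  then have "norm (meas_map Q Y - (meas_map Q \<sigma> + f)) \<le> norm f" by (simp add: frob_eq_norm)
  moreover have "norm (meas_map Q (Y - \<sigma>)) \<le> norm (meas_map Q Y - (meas_map Q \<sigma> + f)) + norm f"
    using norm_triangle_ineq[of "meas_map Q Y - (meas_map Q \<sigma> + f)" f] by (simp add: meas_map_diff)
  ultimately show ?thesis by linarith
qed

lemma minimizer_error_le_measurement_noise:
  fixes Q :: "'l::finite \<Rightarrow> 'm::finite \<Rightarrow> complex^'d::finite^'d"
  assumes "\<forall>i. is_povm (Q i)" and "determines_pure Q"
  shows "\<exists>c>0. \<forall>\<sigma> f Y. is_pure_state \<sigma> \<longrightarrow> is_minimizer Q (meas_map Q \<sigma> + f) Y \<longrightarrow>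
           c * norm (Y - \<sigma>) \<le> 2 * norm f"
proof -
  obtain c where c: "c > 0"
    and stable: "\<And>\<psi> X. norm \<psi> = 1 \<Longrightarrow> X \<in> tangent_cone \<psi> \<Longrightarrow> c * norm X \<le> norm (meas_map Q X)"
    using tangent_cone_meas_map_lower_bound[OF assms] by auto
  have "c * norm (Y - \<sigma>) \<le> 2 * norm f"
    if \<sigma>: "is_pure_state \<sigma>" and Y: "is_minimizer Q (meas_map Q \<sigma> + f) Y" for \<sigma> f Y
  proof -
    obtain p where p: "norm p = 1" "\<sigma> = outer_prod p"
      using \<sigma> unfolding is_pure_state_def outer_prod_def by blast
    have "psd Y" "psd \<sigma>" using Y \<sigma> by (simp_all add: is_minimizer_def is_pure_state_def is_state_def)
    then show ?thesis
      using stable[OF p(1) psd_diff_outer_prod_in_tangent_cone] minimizer_meas_map_error[OF Y] p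
      by (meson order_trans)
  qed
  with c show ?thesis by blast
qed

theorem theorem4:
  fixes Q :: "'l::finite \<Rightarrow> 'm::finite \<Rightarrow> complex^'d::finite^'d"
    and NH :: "complex^'d^'d \<Rightarrow> real"
    and NM :: "real^'m^'l \<Rightarrow> real"
  assumes "is_norm_on {X. hermitian X} NH"
    and "is_norm_on UNIV NM"
    and "\<forall>i. is_povm (Q i)"
    and "determines_pure Q"
  shows "\<exists>C>0. \<forall>\<epsilon>>0. \<forall>\<sigma> f. is_pure_state \<sigma> \<longrightarrow> NM f \<le> \<epsilon> \<longrightarrow>
           (\<forall>Y. is_minimizer Q (meas_map Q \<sigma> + f) Y \<longrightarrow> NH (Y - \<sigma>) \<le> C * \<epsilon>)"
proof -
  obtain K where K: "\<And>X. hermitian X \<Longrightarrow> NH X \<le> K * norm X"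
    using is_norm_on_le_norm[OF subspace_hermitian assms(1)] by auto
  obtain a where a: "a > 0" "\<And>f. a * norm f \<le> NM f"
    using is_norm_on_ge_norm[OF assms(2)] by auto
  obtain c where c: "c > 0" and error: "\<And>\<sigma> f Y. is_pure_state \<sigma> \<Longrightarrow>
      is_minimizer Q (meas_map Q \<sigma> + f) Y \<Longrightarrow> c * norm (Y - \<sigma>) \<le> 2 * norm f"
    using minimizer_error_le_measurement_noise[OF assms(3,4)] by auto
  have "NH (Y - \<sigma>) \<le> (2 * (\<bar>K\<bar> + 1) / (a * c)) * \<epsilon>"
    if \<sigma>: "is_pure_state \<sigma>" and f: "NM f \<le> \<epsilon>" and Y: "is_minimizer Q (meas_map Q \<sigma> + f) Y"
    for \<epsilon> \<sigma> f Y
  proof -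
    have "a * (c * norm (Y - \<sigma>)) \<le> a * (2 * norm f)" using error[OF \<sigma> Y] a(1) by simp
    also have "\<dots> \<le> 2 * \<epsilon>" using a(2)[of f] f by simp
    finally have "norm (Y - \<sigma>) \<le> 2 * \<epsilon> / (a * c)" using a(1) c by (simp add: pos_le_divide_eq mult_ac)
    have "hermitian (Y - \<sigma>)"
      using Y \<sigma> by (simp add: is_minimizer_def is_pure_state_def is_state_def psd_def hermitian_diff)
    then have "NH (Y - \<sigma>) \<le> K * norm (Y - \<sigma>)" by (rule K)
    also have "\<dots> \<le> (\<bar>K\<bar> + 1) * norm (Y - \<sigma>)" by (rule mult_right_mono) simp_all
    also have "\<dots> \<le> (\<bar>K\<bar> + 1) * (2 * \<epsilon> / (a * c))"
      using \<open>norm (Y - \<sigma>) \<le> 2 * \<epsilon> / (a * c)\<close> by (rule mult_left_mono) simp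
    finally show ?thesis by (simp add: algebra_simps)
  qed
  moreover have "2 * (\<bar>K\<bar> + 1) / (a * c) > 0" using a c by (simp add: add_pos_nonneg)
  ultimately show ?thesis by blast
qed

end
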